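(* Assume the genus-two setting described in the context (so $N=1$), and let $\alpha$ be one of the branchpoints $\alpha_0,\dots,\alpha_5$, regarded as an independent complex variable (all other branchpoints, the function $f$ and the contours being held fixed). Assume that the modulation equation $K(\alpha)=0$ holds at this branchpoint. Then, for $z$ inside the loop $\hat\gamma$ but outside the loops $\hat\gamma_m$ and $\hat\gamma_c$, \[ \frac{\partial K(z)}{\partial \alpha}=\frac{h(z)}{R(z)}\left[\frac{D}{2(z-\alpha)}+\frac{\partial D}{\partial \alpha}\right]. \]
   Context: Let $\alpha_0,\alpha_2,\alpha_4$ be distinct points in the open upper half-plane and $\alpha_1=\bar\alpha_0$, $\alpha_3=\bar\alpha_2$, $\alpha_5=\bar\alpha_4$. Let $R(z)=\big[\prod_{i=0}^{5}(z-\alpha_i)\big]^{1/2}$, with branchcuts along the main arcs: $\gamma_{m,0}$ (oriented from $\alpha_1$ to $\alpha_0$), $\gamma_m^+$ (from $\alpha_2$ to $\alpha_4$) and $\gamma_m^-$ (from $\alpha_5$ to $\alpha_3$); set $\gamma_m=\gamma_m^+\cup\gamma_m^-$. The complementary arcs are $\gamma_c^+$ (from $\alpha_0$ to $\alpha_2$) and $\gamma_c^-$ (from $\alpha_3$ to $\alpha_1$), $\gamma_c=\gamma_c^+\cup\gamma_c^-$; $\gamma$ is the union of all main and complementary arcs with these orientations. The function $f(z)$ is analytic in the upper half-plane except for finitely many logarithmic branchcuts and isolated singularities (none on the main arcs), and is extended to the lower half-plane by Schwarz reflection. Contours: $\hat\gamma$ is a loop around $\gamma$; $\hat\gamma_m$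 consists of loops around the arcs of $\gamma_m$; $\hat\gamma_c$ consists of two oppositely oriented arcs around $\gamma_c$ (so that integrals over arcs of $1/R_+$ become half of the loop integrals); all are contractible onto their arcs. Define \[ D=\det\begin{pmatrix}\oint_{\hat\gamma_m}\frac{d\zeta}{R(\zeta)}&\oint_{\hat\gamma_m}\frac{\zeta\,d\zeta}{R(\zeta)}\\ \oint_{\hat\gamma_c}\frac{d\zeta}{R(\zeta)}&\oint_{\hat\gamma_c}\frac{\zeta\,d\zeta}{R(\zeta)}\end{pmatrix},\quad K(z)=\frac{1}{2\pi i}\det\begin{pmatrix}\oint_{\hat\gamma_m}\frac{d\zeta}{R(\zeta)}&\oint_{\hat\gamma_m}\frac{\zeta\,d\zeta}{R(\zeta)}&\oint_{\hat\gamma_m}\frac{d\zeta}{(\zeta-z)R(\zeta)}\\ \oint_{\hat\gamma_c}\frac{d\zeta}{R(\zeta)}&\oint_{\hat\gamma_c}\frac{\zeta\,d\zeta}{R(\zeta)}&\oint_{\hat\gamma_c}\frac{d\zeta}{(\zeta-z)R(\zeta)}\\ \oint_{\hat\gamma}\frac{f(\zeta)d\zeta}{R(\zeta)}&\oint_{\hat\gamma}\frac{\zeta f(\zeta)d\zeta}{R(\zeta)}&\oint_{\hat\gamma}\frac{f(\zeta)d\zeta}{(\zeta-z)R(\zeta)}\end{pmatrix}. \] ($D\neq0$ for distinct branchpoints.) Let the constants $W,\Omega$ be determined by the linear equations $\oint_{\hat\gamma}\frac{\zeta^k f(\zeta)}{R(\zeta)}d\zeta+W\oint_{\hat\gamma_m}\frac{\zeta^k}{R(\zeta)}d\zeta+\Omega\oint_{\hat\gamma_c}\frac{\zeta^k}{R(\zeta)}d\zeta=0$,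 $k=0,1$, and for $z$ inside $\hat\gamma$ but outside $\hat\gamma_m,\hat\gamma_c$ let \[ h(z)=\frac{R(z)}{2\pi i}\Big[\oint_{\hat\gamma}\frac{f(\zeta)d\zeta}{(\zeta-z)R(\zeta)}+\oint_{\hat\gamma_m}\frac{W\,d\zeta}{(\zeta-z)R(\zeta)}+\oint_{\hat\gamma_c}\frac{\Omega\,d\zeta}{(\zeta-z)R(\zeta)}\Big] \] (equivalently $h=2g-f$ where $g$ solves the scalar RHP $g_++g_-=f+W_j$ on main arcs, $W_0=0$, $g_+-g_-=\Omega$ on complementary arcs, $g$ analytic at $\infty$). One has $h(z)=R(z)K(z)/D$. The modulation equation at a branchpoint $\alpha_{2j}$ is $K(\alpha_{2j})=0$, where $\alpha_{2j}$ is taken inside the loops around the arcs adjacent to it but outside all other loops. *)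

theory Defs
  imports "HOL-Complex_Analysis.Complex_Analysis"
begin

text \<open>Branchpoints alpha_0..alpha_5 are al 0 .. al 5.  The branchpoint with index j is
  replaced by the free complex variable a; all others are kept fixed.\<close>
definition brpt :: "(nat \<Rightarrow> complex) \<Rightarrow> nat \<Rightarrow> complex \<Rightarrow> nat \<Rightarrow> complex" where
  "brpt al j a k = (if k = j then a else al k)"

definition Ppoly :: "(nat \<Rightarrow> complex) \<Rightarrow> nat \<Rightarrow> complex \<Rightarrow> complex \<Rightarrow> complex" where
  "Ppoly al j a \<zeta> = (\<Prod>k<6. (\<zeta> - brpt al j a k))"

text \<open>Integral over a contour consisting of two closed paths (the two loops of
  hat-gamma_m, resp. the two closed contours of hat-gamma_c).\<close>
definition cint2 :: "(real \<Rightarrow> complex) \<Rightarrow> (real \<Rightarrow> complex) \<Rightarrow> (complex \<Rightarrow> complex) \<Rightarrow> complex" where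
  "cint2 p q g = contour_integral p g + contour_integral q g"

definition det3 :: "complex \<Rightarrow> complex \<Rightarrow> complex \<Rightarrow> complex \<Rightarrow> complex \<Rightarrow> complex
    \<Rightarrow> complex \<Rightarrow> complex \<Rightarrow> complex \<Rightarrow> complex" where
  "det3 a11 a12 a13 a21 a22 a23 a31 a32 a33 =
     a11 * (a22 * a33 - a23 * a32) - a12 * (a21 * a33 - a23 * a31) + a13 * (a21 * a32 - a22 * a31)"

text \<open>D, K, h for given branches: R is the branch of the square root used on the
  loops hat-gamma and hat-gamma_m (the sheet with cuts on the main arcs), Rc is the
  branch of the square root obtained by continuation along the closed contours hat-gamma_c
  (which cross the main-arc cuts, i.e. change sheet).\<close>
definition Dfun :: "(complex \<Rightarrow> complex) \<Rightarrow> (complex \<Rightarrow> complex) \<Rightarrow> (real \<Rightarrow> complex) \<Rightarrow> (real \<Rightarrow> complex)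
    \<Rightarrow> (real \<Rightarrow> complex) \<Rightarrow> (real \<Rightarrow> complex) \<Rightarrow> complex" where
  "Dfun R Rc gmp gmm gcp gcm =
     cint2 gmp gmm (\<lambda>\<zeta>. 1 / R \<zeta>) * cint2 gcp gcm (\<lambda>\<zeta>. \<zeta> / Rc \<zeta>)
   - cint2 gmp gmm (\<lambda>\<zeta>. \<zeta> / R \<zeta>) * cint2 gcp gcm (\<lambda>\<zeta>. 1 / Rc \<zeta>)"

definition Kfun :: "(complex \<Rightarrow> complex) \<Rightarrow> (complex \<Rightarrow> complex) \<Rightarrow> (complex \<Rightarrow> complex) \<Rightarrow> (real \<Rightarrow> complex)
    \<Rightarrow> (real \<Rightarrow> complex) \<Rightarrow> (real \<Rightarrow> complex) \<Rightarrow> (real \<Rightarrow> complex) \<Rightarrow> (real \<Rightarrow> complex)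
    \<Rightarrow> complex \<Rightarrow> complex" where
  "Kfun R Rc f gh gmp gmm gcp gcm z = 1 / (2 * pi * \<i>) * det3
     (cint2 gmp gmm (\<lambda>\<zeta>. 1 / R \<zeta>)) (cint2 gmp gmm (\<lambda>\<zeta>. \<zeta> / R \<zeta>))
       (cint2 gmp gmm (\<lambda>\<zeta>. 1 / ((\<zeta> - z) * R \<zeta>)))
     (cint2 gcp gcm (\<lambda>\<zeta>. 1 / Rc \<zeta>)) (cint2 gcp gcm (\<lambda>\<zeta>. \<zeta> / Rc \<zeta>))
       (cint2 gcp gcm (\<lambda>\<zeta>. 1 / ((\<zeta> - z) * Rc \<zeta>)))
     (contour_integral gh (\<lambda>\<zeta>. f \<zeta> / R \<zeta>)) (contour_integral gh (\<lambda>\<zeta>. \<zeta> * f \<zeta> / R \<zeta>))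
       (contour_integral gh (\<lambda>\<zeta>. f \<zeta> / ((\<zeta> - z) * R \<zeta>)))"

definition hfun :: "(complex \<Rightarrow> complex) \<Rightarrow> (complex \<Rightarrow> complex) \<Rightarrow> (complex \<Rightarrow> complex) \<Rightarrow> (real \<Rightarrow> complex)
    \<Rightarrow> (real \<Rightarrow> complex) \<Rightarrow> (real \<Rightarrow> complex) \<Rightarrow> (real \<Rightarrow> complex) \<Rightarrow> (real \<Rightarrow> complex)
    \<Rightarrow> complex \<Rightarrow> complex \<Rightarrow> complex \<Rightarrow> complex" where
  "hfun R Rc f gh gmp gmm gcp gcm W \<Omega> z = R z / (2 * pi * \<i>) *
     (contour_integral gh (\<lambda>\<zeta>. f \<zeta> / ((\<zeta> - z) * R \<zeta>))
      + cint2 gmp gmm (\<lambda>\<zeta>. W / ((\<zeta> - z) * R \<zeta>))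
      + cint2 gcp gcm (\<lambda>\<zeta>. \<Omega> / ((\<zeta> - z) * Rc \<zeta>)))"

end

theory Submission
  imports Defs
begin

text \<open>Away from the moving branchpoint, R_a(\<zeta>) = R_\<alpha>(\<zeta>) \<cdot> sqrt((\<zeta> - a)/(\<zeta> - \<alpha>)), so
  \<partial>_a (1/R_a) = 1/(2(\<zeta> - \<alpha>)R) at a = \<alpha> with a remainder that is O(|a - \<alpha>|) uniformly on the
  contours, and every entry of D and K may be differentiated under the integral sign. By partial
  fractions the derivative of each row of K is expressed through the row itself and its entry
  A = \<oint>g/((\<zeta> - \<alpha>)R), i.e. through the entries of K(\<alpha>). As D \<noteq> 0, the modulation equation
  K(\<alpha>) = 0 makes the column of these A a combination of the first two columns, so each
  determinant in the derivative of K is a multiple of K(z); finally the equations defining W and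
  \<Omega> turn K(z) into D h(z)/R(z).\<close>

section \<open>Square roots\<close>

lemma norm_inverse_sqrt_remainder:
  fixes s u :: complex
  assumes s: "s\<^sup>2 = 1 - u" "0 \<le> Re s" and u: "norm u \<le> 1/2"
  shows "norm (1/s - 1 - u/2) \<le> 4 * (norm u)\<^sup>2"
proof -
  have "(s - 1) * (s + 1) = - u"
    using s(1) by (simp add: algebra_simps power2_eq_square)
  hence "norm (s - 1) * norm (s + 1) = norm u"
    by (metis norm_minus_cancel norm_mult)
  moreover have "1 \<le> norm (s + 1)"
    using abs_Re_le_cmod[of "s + 1"] s(2) by simp
  ultimately have s1: "norm (s - 1) \<le> norm u"
    by (metis norm_ge_zero mult_left_mono mult.right_neutral)
  have "norm (1::complex) \<le> norm s + norm (1 - s)"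
    by (metis add.commute diff_add_cancel norm_triangle_ineq)
  hence s_half: "1/2 \<le> norm s"
    using s1 u by (simp add: norm_minus_commute)
  have s2: "norm (s + 2) \<le> 7/2"
    using norm_triangle_ineq[of "s - 1" 3] s1 u by (simp add: algebra_simps)
  have "u = 1 - s * s"
    using s(1) by (simp add: power2_eq_square)
  moreover have "s \<noteq> 0" using s_half by auto
  ultimately have "1/s - 1 - u/2 = (s - 1)\<^sup>2 * (s + 2) / (2 * s)"
    by (simp add: divide_simps power2_eq_square) (simp add: algebra_simps)
  hence "norm (1/s - 1 - u/2) = (norm (s - 1))\<^sup>2 * norm (s + 2) / (2 * norm s)"
    by (simp add: norm_mult norm_divide norm_power)
  also have "\<dots> \<le> (norm u)\<^sup>2 * (7/2) / (2 * (1/2))"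
    using s1 s2 s_half by (intro frac_le mult_mono power_mono) auto
  also have "\<dots> \<le> 4 * (norm u)\<^sup>2"
    by simp
  finally show ?thesis .
qed

lemma ratio_notin_nonpos_Reals:
  fixes a a0 \<zeta> :: complex
  assumes "norm (a - a0) < norm (\<zeta> - a0)"
  shows "(\<zeta> - a) / (\<zeta> - a0) \<notin> \<real>\<^sub>\<le>\<^sub>0"
proof -
  have "\<zeta> \<noteq> a0" using assms by auto
  hence "(\<zeta> - a) / (\<zeta> - a0) = 1 - (a - a0) / (\<zeta> - a0)"
    by (simp add: field_simps)
  moreover have "norm ((a - a0) / (\<zeta> - a0)) < 1"
    using assms \<open>\<zeta> \<noteq> a0\<close> by (simp add: norm_divide divide_simps)
  hence "Re ((a - a0) / (\<zeta> - a0)) < 1"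
    by (meson abs_Re_le_cmod abs_le_D1 le_less_trans)
  ultimately show ?thesis by (auto simp: complex_nonpos_Reals_iff)
qed

lemma inverse_csqrt_ratio_remainder:
  fixes a a0 \<zeta> :: complex
  assumes \<zeta>: "r \<le> norm (\<zeta> - a0)" and a: "norm (a - a0) \<le> r/2" "a \<noteq> a0"
  shows "norm ((1 / csqrt ((\<zeta> - a) / (\<zeta> - a0)) - 1) / (a - a0) - 1 / (2 * (\<zeta> - a0)))
           \<le> 4 / r\<^sup>2 * norm (a - a0)"
proof -
  have "0 < norm (a - a0)" using a(2) by simp
  hence r: "0 < r" using a(1) by linarith
  have \<zeta>0: "\<zeta> \<noteq> a0" using \<zeta> r by auto
  define u where "u = (a - a0) / (\<zeta> - a0)"
  have ratio: "(\<zeta> - a) / (\<zeta> - a0) = 1 - u"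
    using \<zeta>0 by (simp add: u_def field_simps)
  have norm_u: "norm u = norm (a - a0) / norm (\<zeta> - a0)"
    by (simp add: u_def norm_divide)
  have "norm u \<le> 1/2"
    unfolding norm_u using a \<zeta> r by (simp add: divide_simps)
  hence bound: "norm (1 / csqrt (1 - u) - 1 - u/2) \<le> 4 * (norm u)\<^sup>2"
    by (rule norm_inverse_sqrt_remainder[OF power2_csqrt Re_csqrt])
  have "(1 / csqrt (1 - u) - 1) / (a - a0) - 1 / (2 * (\<zeta> - a0))
          = (1 / csqrt (1 - u) - 1 - u/2) / (a - a0)"
    using \<zeta>0 a(2) by (simp add: u_def field_simps)
  hence "norm ((1 / csqrt (1 - u) - 1) / (a - a0) - 1 / (2 * (\<zeta> - a0)))
          \<le> 4 * (norm u)\<^sup>2 / norm (a - a0)"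
    using bound by (simp add: norm_divide divide_right_mono)
  also have "\<dots> = 4 / (norm (\<zeta> - a0))\<^sup>2 * norm (a - a0)"
    using a(2) by (simp add: norm_u power2_eq_square field_simps)
  also have "\<dots> \<le> 4 / r\<^sup>2 * norm (a - a0)"
    using \<zeta> r by (intro mult_right_mono divide_left_mono power_mono mult_pos_pos) auto
  finally show ?thesis by (simp only: ratio)
qed

lemma continuous_sqrt_eq_csqrt:
  fixes F w :: "complex \<Rightarrow> complex"
  assumes A: "connected A" "a0 \<in> A" "a \<in> A"
    and cont: "continuous_on A F" "continuous_on A w"
    and sq: "\<And>b. b \<in> A \<Longrightarrow> (F b)\<^sup>2 = (F a0)\<^sup>2 * w b"
    and w: "\<And>b. b \<in> A \<Longrightarrow> w b \<notin> \<real>\<^sub>\<le>\<^sub>0" "w a0 = 1"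
    and F0: "F a0 \<noteq> 0"
  shows "F a = F a0 * csqrt (w a)"
proof -
  define t where "t b = F b / (F a0 * csqrt (w b))" for b
  have sqrt_nz: "csqrt (w b) \<noteq> 0" if "b \<in> A" for b
    using w(1)[OF that] by auto
  have "continuous_on A t"
    unfolding t_def using w(1) sqrt_nz F0
    by (intro continuous_intros cont continuous_on_compose2[OF continuous_on_csqrt]) auto
  moreover have "t ` A \<subseteq> {1, -1}"
  proof
    fix y assume "y \<in> t ` A"
    then obtain b where b: "b \<in> A" "y = t b" by blast
    have "(t b)\<^sup>2 = 1"
      using sq[OF b(1)] sqrt_nz[OF b(1)] F0 unfolding t_def
      by (simp add: power_divide power_mult_distrib)
    thus "y \<in> {1, -1}" using b(2) by (simp add: power2_eq_1_iff)
  qed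
  ultimately have "t constant_on A"
    by (intro continuous_finite_range_constant A(1)) (auto intro: finite_subset)
  moreover have "t a0 = 1" using w(2) F0 by (simp add: t_def)
  ultimately have "t a = 1" using A unfolding constant_on_def by metis
  thus ?thesis using sqrt_nz[OF A(3)] F0 by (simp add: t_def divide_eq_1_iff)
qed

lemma ball_one_one_notin_nonpos_Reals: "(w::complex) \<in> ball 1 1 \<Longrightarrow> w \<notin> \<real>\<^sub>\<le>\<^sub>0"
  using abs_Re_le_cmod[of "1 - w"] by (auto simp: complex_nonpos_Reals_iff dist_norm)

lemma holomorphic_on_continuous_sqrt:
  fixes F P :: "complex \<Rightarrow> complex"
  assumes T: "open T" and F: "continuous_on T F" "\<And>\<zeta>. \<zeta> \<in> T \<Longrightarrow> F \<zeta> \<noteq> 0"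
    and P: "P holomorphic_on T" "\<And>\<zeta>. \<zeta> \<in> T \<Longrightarrow> (F \<zeta>)\<^sup>2 = P \<zeta>"
  shows "F holomorphic_on T"
  unfolding holomorphic_on_open[OF T]
proof
  fix x assume x: "x \<in> T"
  have Px: "P x \<noteq> 0" using F(2)[OF x] P(2)[OF x] by auto
  \<comment> \<open>Near x, F is a continuous square root of (F x)^2 \<cdot> P/P x, and P/P x stays in ball 1 1,
    where csqrt is holomorphic.\<close>
  define w where "w y = P y / P x" for y
  have w_cont: "continuous_on T w"
    unfolding w_def using P(1) Px holomorphic_on_imp_continuous_on by (intro continuous_intros) auto
  have "open (T \<inter> w -` ball 1 1)" "x \<in> T \<inter> w -` ball 1 1"
    using continuous_open_preimage[OF w_cont T open_ball] x Px by (auto simp: w_def)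
  then obtain e where e: "0 < e" "ball x e \<subseteq> T \<inter> w -` ball 1 1"
    by (meson openE)
  have F_eq: "F y = F x * csqrt (w y)" if "y \<in> ball x e" for y
  proof (rule continuous_sqrt_eq_csqrt[where A = "ball x e"])
    show "continuous_on (ball x e) F" "continuous_on (ball x e) w"
      using F(1) w_cont e(2) by (auto intro: continuous_on_subset)
    show "(F b)\<^sup>2 = (F x)\<^sup>2 * w b" if "b \<in> ball x e" for b
      using that e(2) P(2) x Px by (auto simp: w_def)
    show "w b \<notin> \<real>\<^sub>\<le>\<^sub>0" if "b \<in> ball x e" for b
      using that e(2) ball_one_one_notin_nonpos_Reals by blast
  qed (use e(1) that Px F(2)[OF x] in \<open>simp_all add: w_def\<close>)
  have "w holomorphic_on ball x e"
    unfolding w_def using e(2) P(1) by (intro holomorphic_intros) (auto intro: holomorphic_on_subset)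
  hence "(\<lambda>y. F x * csqrt (w y)) holomorphic_on ball x e"
    using e(2) ball_one_one_notin_nonpos_Reals by (intro holomorphic_intros) blast+
  hence "F holomorphic_on ball x e"
    by (rule holomorphic_transform) (simp add: F_eq)
  thus "\<exists>f'. (F has_field_derivative f') (at x)"
    using e(1) holomorphic_on_imp_differentiable_at[of F "ball x e" x]
    by (auto simp: field_differentiable_def)
qed

section \<open>Contour integrals depending on a parameter\<close>

lemma contour_integral_cmult: "contour_integral g (\<lambda>x. c * f x) = c * contour_integral g f"
  by (simp add: contour_integral_integral mult.assoc)

lemma contour_integral_divide_const: "contour_integral g (\<lambda>x. f x / c) = contour_integral g f / c"
  using contour_integral_cmult[of g "inverse c" f] by (simp add: divide_inverse_commute)

lemma has_field_derivative_contour_integral_family: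
  fixes F :: "complex \<Rightarrow> complex \<Rightarrow> complex" and F' q :: "complex \<Rightarrow> complex"
  assumes T: "open T" and \<gamma>: "valid_path \<gamma>" "path_image \<gamma> \<subseteq> T" and \<delta>: "0 < \<delta>"
    and F: "\<And>a. a \<in> ball a0 \<delta> \<Longrightarrow> F a holomorphic_on T" and F': "F' holomorphic_on T"
    and q: "continuous_on T q"
    and remainder: "\<And>a \<zeta>. a \<in> ball a0 \<delta> \<Longrightarrow> a \<noteq> a0 \<Longrightarrow> \<zeta> \<in> T \<Longrightarrow>
          norm ((F a \<zeta> - F a0 \<zeta>) / (a - a0) - F' \<zeta>) \<le> C * norm (q \<zeta>) * norm (a - a0)"
  shows "((\<lambda>a. contour_integral \<gamma> (F a)) has_field_derivative contour_integral \<gamma> F') (at a0)"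
proof -
  have "compact (q ` path_image \<gamma>)"
    using continuous_on_subset[OF q \<gamma>(2)] compact_valid_path_image[OF \<gamma>(1)]
    by (rule compact_continuous_image)
  then obtain M where M: "\<And>\<zeta>. \<zeta> \<in> path_image \<gamma> \<Longrightarrow> norm (q \<zeta>) \<le> M"
    by (meson bounded_iff compact_imp_bounded imageI)
  \<comment> \<open>contour_integral_bound_exists needs a bound on an open neighbourhood of the path.\<close>
  define T' where "T' = T \<inter> q -` ball 0 (M + 1)"
  have T': "open T'" "path_image \<gamma> \<subseteq> T'" "T' \<subseteq> T"
    using continuous_open_preimage[OF q T open_ball] \<gamma>(2) M by (force simp: T'_def)+
  obtain L where L: "\<And>f B. f holomorphic_on T' \<Longrightarrow> (\<And>z. z \<in> T' \<Longrightarrow> norm (f z) \<le> B)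
      \<Longrightarrow> norm (contour_integral \<gamma> f) \<le> L * B"
    using contour_integral_bound_exists[OF T'(1) \<gamma>(1) T'(2)] by blast
  have integrable: "G contour_integrable_on \<gamma>" if "G holomorphic_on T" for G
    using contour_integrable_holomorphic_simple[OF that T \<gamma>] .
  define K where "K = L * (\<bar>C\<bar> * (M + 1))"
  have "\<forall>\<^sub>F a in at a0. norm ((contour_integral \<gamma> (F a) - contour_integral \<gamma> (F a0)) / (a - a0)
          - contour_integral \<gamma> F') \<le> K * norm (a - a0)"
    unfolding eventually_at
  proof (intro exI[of _ \<delta>] conjI ballI impI)
    fix a assume "a \<noteq> a0 \<and> dist a a0 < \<delta>"
    hence a: "a \<in> ball a0 \<delta>" "a \<noteq> a0" by (auto simp: dist_commute)
    have a0: "a0 \<in> ball a0 \<delta>" using \<delta> by simp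
    define E where "E \<zeta> = (F a \<zeta> - F a0 \<zeta>) / (a - a0) - F' \<zeta>" for \<zeta>
    have "(E has_contour_integral (contour_integral \<gamma> (F a) - contour_integral \<gamma> (F a0)) / (a - a0)
             - contour_integral \<gamma> F') \<gamma>"
      unfolding E_def using F[OF a(1)] F[OF a0] F'
      by (intro has_contour_integral_diff has_contour_integral_div has_contour_integral_integral integrable)
    hence "contour_integral \<gamma> E = (contour_integral \<gamma> (F a) - contour_integral \<gamma> (F a0)) / (a - a0)
             - contour_integral \<gamma> F'"
      by (rule contour_integral_unique)
    moreover have "E holomorphic_on T'"
      unfolding E_def using F[OF a(1)] F[OF a0] F' T'(3)
      by (intro holomorphic_intros) (auto intro: holomorphic_on_subset)
    moreover have "norm (E \<zeta>) \<le> \<bar>C\<bar> * (M + 1) * norm (a - a0)" if "\<zeta> \<in> T'" for \<zeta>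
    proof -
      have "norm (q \<zeta>) \<le> M + 1" using that by (auto simp: T'_def)
      hence "C * norm (q \<zeta>) \<le> \<bar>C\<bar> * (M + 1)"
        by (smt (verit) abs_ge_self mult_mono norm_ge_zero abs_ge_zero)
      thus ?thesis
        unfolding E_def using remainder[OF a] that T'(3)
        by (smt (verit) mult_right_mono norm_ge_zero subsetD)
    qed
    ultimately show "norm ((contour_integral \<gamma> (F a) - contour_integral \<gamma> (F a0)) / (a - a0)
          - contour_integral \<gamma> F') \<le> K * norm (a - a0)"
      using L by (metis K_def mult.assoc)
  qed (use \<delta> in simp)
  moreover have "((\<lambda>a. K * norm (a - a0)) \<longlongrightarrow> 0) (at a0)"
    by (intro tendsto_eq_intros) auto
  ultimately have "((\<lambda>a. (contour_integral \<gamma> (F a) - contour_integral \<gamma> (F a0)) / (a - a0)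
                    - contour_integral \<gamma> F') \<longlongrightarrow> 0) (at a0)"
    by (rule Lim_null_comparison)
  thus ?thesis
    unfolding has_field_derivative_iff by (rule LIM_zero_cancel)
qed

section \<open>Branches of the square root with a moving branchpoint\<close>

lemma Ppoly_mult_eq:
  assumes "j < 6"
  shows "Ppoly al j a \<zeta> * (\<zeta> - b) = Ppoly al j b \<zeta> * (\<zeta> - a)"
proof -
  have factor: "Ppoly al j c \<zeta> = (\<zeta> - c) * (\<Prod>k\<in>{..<6} - {j}. \<zeta> - al k)" for c
  proof -
    have "(\<Prod>k\<in>{..<6} - {j}. \<zeta> - brpt al j c k) = (\<Prod>k\<in>{..<6} - {j}. \<zeta> - al k)"
      by (rule prod.cong) (auto simp: brpt_def)
    thus ?thesis
      using prod.remove[of "{..<6}" j "\<lambda>k. \<zeta> - brpt al j c k"] assms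
      by (simp add: Ppoly_def brpt_def)
  qed
  show ?thesis
    unfolding factor by (simp add: algebra_simps)
qed

lemma Ppoly_nonzero: "(\<And>k. k < 6 \<Longrightarrow> \<zeta> \<noteq> al k) \<Longrightarrow> Ppoly al j (al j) \<zeta> \<noteq> 0"
  unfolding Ppoly_def brpt_def by auto

text \<open>A row (\<oint>g/R, \<oint>\<zeta>g/R, \<oint>g/((\<zeta>-z)R)) of D or K, with A = \<oint>g/((\<zeta>-a)R): since the
  a-derivative of 1/R is 1/(2(\<zeta>-a)R), partial fractions express the three derivatives through
  the row itself and A.\<close>
definition has_row_derivatives ::
    "(complex \<Rightarrow> complex) \<Rightarrow> (complex \<Rightarrow> complex) \<Rightarrow> (complex \<Rightarrow> complex)
      \<Rightarrow> complex \<Rightarrow> complex \<Rightarrow> complex \<Rightarrow> bool" where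
  "has_row_derivatives e0 e1 ez A a z \<longleftrightarrow>
     (e0 has_field_derivative A / 2) (at a) \<and>
     (e1 has_field_derivative (e0 a + a * A) / 2) (at a) \<and>
     (ez has_field_derivative (ez a - A) / (2 * (z - a))) (at a)"

lemma has_row_derivatives_add:
  assumes "has_row_derivatives e0 e1 ez A a z" "has_row_derivatives g0 g1 gz B a z"
  shows "has_row_derivatives (\<lambda>b. e0 b + g0 b) (\<lambda>b. e1 b + g1 b) (\<lambda>b. ez b + gz b) (A + B) a z"
  using assms unfolding has_row_derivatives_def
  by (auto intro!: DERIV_cong[OF DERIV_add] simp: add_divide_distrib[symmetric] algebra_simps)

text \<open>R a is the branch of the square root of the polynomial after its root a0 has moved to a,
  on an open set T away from the disc of motion.\<close>
locale branch_family =
  fixes T :: "complex set" and R :: "complex \<Rightarrow> complex \<Rightarrow> complex" and a0 :: complex and r :: real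
  assumes open_T: "open T" and r_pos: "0 < r" and far: "\<And>\<zeta>. \<zeta> \<in> T \<Longrightarrow> r \<le> norm (\<zeta> - a0)"
    and holomorphic_base: "R a0 holomorphic_on T"
    and base_nonzero: "\<And>\<zeta>. \<zeta> \<in> T \<Longrightarrow> R a0 \<zeta> \<noteq> 0"
    and continuous_param: "\<And>\<zeta>. \<zeta> \<in> T \<Longrightarrow> continuous_on (ball a0 r) (\<lambda>a. R a \<zeta>)"
    and square_param: "\<And>a \<zeta>. a \<in> ball a0 r \<Longrightarrow> \<zeta> \<in> T \<Longrightarrow>
          (R a \<zeta>)\<^sup>2 * (\<zeta> - a0) = (R a0 \<zeta>)\<^sup>2 * (\<zeta> - a)"
begin

lemma subset: "open T' \<Longrightarrow> T' \<subseteq> T \<Longrightarrow> branch_family T' R a0 r"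
  using far base_nonzero continuous_param square_param r_pos holomorphic_on_subset[OF holomorphic_base]
  by unfold_locales auto

lemma base_ne: "\<zeta> \<in> T \<Longrightarrow> \<zeta> \<noteq> a0"
  using far r_pos by force

lemma eq_base_csqrt:
  assumes a: "a \<in> ball a0 r" and \<zeta>: "\<zeta> \<in> T"
  shows "R a \<zeta> = R a0 \<zeta> * csqrt ((\<zeta> - a) / (\<zeta> - a0))"
proof (rule continuous_sqrt_eq_csqrt[where A = "ball a0 r" and F = "\<lambda>a. R a \<zeta>"])
  show "continuous_on (ball a0 r) (\<lambda>b. (\<zeta> - b) / (\<zeta> - a0))"
    by (intro continuous_intros) (use base_ne[OF \<zeta>] in auto)
  show "(R b \<zeta>)\<^sup>2 = (R a0 \<zeta>)\<^sup>2 * ((\<zeta> - b) / (\<zeta> - a0))" if "b \<in> ball a0 r" for b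
    using square_param[OF that \<zeta>] base_ne[OF \<zeta>] by (simp add: field_simps)
  show "(\<zeta> - b) / (\<zeta> - a0) \<notin> \<real>\<^sub>\<le>\<^sub>0" if "b \<in> ball a0 r" for b
    using that far[OF \<zeta>] by (intro ratio_notin_nonpos_Reals) (auto simp: dist_norm norm_minus_commute)
qed (use a \<zeta> r_pos base_ne[OF \<zeta>] base_nonzero continuous_param in auto)

lemma has_field_derivative_contour_integral:
  assumes \<gamma>: "valid_path \<gamma>" "path_image \<gamma> \<subseteq> T" and G: "G holomorphic_on T"
  shows "((\<lambda>a. contour_integral \<gamma> (\<lambda>\<zeta>. G \<zeta> / R a \<zeta>)) has_field_derivative
           contour_integral \<gamma> (\<lambda>\<zeta>. G \<zeta> / ((\<zeta> - a0) * R a0 \<zeta>)) / 2) (at a0)"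
proof -
  have "((\<lambda>a. contour_integral \<gamma> (\<lambda>\<zeta>. G \<zeta> / R a \<zeta>)) has_field_derivative
           contour_integral \<gamma> (\<lambda>\<zeta>. G \<zeta> / ((\<zeta> - a0) * R a0 \<zeta>) / 2)) (at a0)"
  proof (rule has_field_derivative_contour_integral_family
      [OF open_T \<gamma> _ _ _ _ _, where \<delta> = "r/2" and q = "\<lambda>\<zeta>. G \<zeta> / R a0 \<zeta>" and C = "4 / r\<^sup>2"])
    fix a assume a: "a \<in> ball a0 (r/2)"
    hence a': "a \<in> ball a0 r" using r_pos by auto
    have "(\<lambda>\<zeta>. G \<zeta> / (R a0 \<zeta> * csqrt ((\<zeta> - a) / (\<zeta> - a0)))) holomorphic_on T"
    proof (intro holomorphic_intros G holomorphic_base)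
      fix \<zeta> assume \<zeta>: "\<zeta> \<in> T"
      have "norm (a - a0) < norm (\<zeta> - a0)"
        using a' far[OF \<zeta>] by (simp add: dist_norm norm_minus_commute)
      thus "(\<zeta> - a) / (\<zeta> - a0) \<notin> \<real>\<^sub>\<le>\<^sub>0" "\<zeta> - a0 \<noteq> 0"
        using ratio_notin_nonpos_Reals by auto
      thus "R a0 \<zeta> * csqrt ((\<zeta> - a) / (\<zeta> - a0)) \<noteq> 0"
        using base_nonzero[OF \<zeta>] by auto
    qed
    thus "(\<lambda>\<zeta>. G \<zeta> / R a \<zeta>) holomorphic_on T"
      by (rule holomorphic_transform) (simp add: eq_base_csqrt[OF a'])
    fix \<zeta> assume "a \<noteq> a0" and \<zeta>: "\<zeta> \<in> T"
    have "norm (a - a0) \<le> r/2" using a by (simp add: dist_norm norm_minus_commute)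
    note remainder = inverse_csqrt_ratio_remainder[OF far[OF \<zeta>] this \<open>a \<noteq> a0\<close>]
    define s where "s = csqrt ((\<zeta> - a) / (\<zeta> - a0))"
    have "\<zeta> \<noteq> a"
      using a' far[OF \<zeta>] by (auto simp: dist_norm norm_minus_commute)
    hence "s \<noteq> 0" using base_ne[OF \<zeta>] by (simp add: s_def)
    have factor: "(g / (\<rho> * t) - g / \<rho>) / d - g / (e * \<rho>) / 2 = g / \<rho> * ((1 / t - 1) / d - 1 / (2 * e))"
      if "\<rho> \<noteq> 0" "t \<noteq> 0" "d \<noteq> 0" "e \<noteq> 0" for g \<rho> t d e :: complex
      using that by (simp add: field_simps)
    have "(G \<zeta> / R a \<zeta> - G \<zeta> / R a0 \<zeta>) / (a - a0) - G \<zeta> / ((\<zeta> - a0) * R a0 \<zeta>) / 2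
        = G \<zeta> / R a0 \<zeta> * ((1 / s - 1) / (a - a0) - 1 / (2 * (\<zeta> - a0)))"
      unfolding eq_base_csqrt[OF a' \<zeta>] s_def[symmetric]
      using \<open>s \<noteq> 0\<close> \<open>a \<noteq> a0\<close> base_nonzero[OF \<zeta>] base_ne[OF \<zeta>] by (intro factor) auto
    hence "norm ((G \<zeta> / R a \<zeta> - G \<zeta> / R a0 \<zeta>) / (a - a0) - G \<zeta> / ((\<zeta> - a0) * R a0 \<zeta>) / 2)
        = norm (G \<zeta> / R a0 \<zeta>) * norm ((1 / s - 1) / (a - a0) - 1 / (2 * (\<zeta> - a0)))"
      by (simp only: norm_mult)
    also have "\<dots> \<le> norm (G \<zeta> / R a0 \<zeta>) * (4 / r\<^sup>2 * norm (a - a0))"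
      using remainder by (intro mult_left_mono) (auto simp: s_def)
    finally show "norm ((G \<zeta> / R a \<zeta> - G \<zeta> / R a0 \<zeta>) / (a - a0) - G \<zeta> / ((\<zeta> - a0) * R a0 \<zeta>) / 2)
          \<le> 4 / r\<^sup>2 * norm (G \<zeta> / R a0 \<zeta>) * norm (a - a0)"
      by (simp only: mult_ac)
  qed (use r_pos G holomorphic_base base_nonzero base_ne holomorphic_on_imp_continuous_on in
       \<open>auto intro!: holomorphic_intros continuous_intros\<close>)
  thus ?thesis by (simp only: contour_integral_divide_const)
qed

lemma has_row_derivatives_contour_integral:
  assumes \<gamma>: "valid_path \<gamma>" "path_image \<gamma> \<subseteq> T" and G: "G holomorphic_on T"
    and w: "w \<notin> T" "w \<noteq> a0"
  shows "has_row_derivatives (\<lambda>a. contour_integral \<gamma> (\<lambda>\<zeta>. G \<zeta> / R a \<zeta>))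
      (\<lambda>a. contour_integral \<gamma> (\<lambda>\<zeta>. \<zeta> * G \<zeta> / R a \<zeta>))
      (\<lambda>a. contour_integral \<gamma> (\<lambda>\<zeta>. G \<zeta> / ((\<zeta> - w) * R a \<zeta>)))
      (contour_integral \<gamma> (\<lambda>\<zeta>. G \<zeta> / ((\<zeta> - a0) * R a0 \<zeta>))) a0 w"
proof -
  have integrable: "H contour_integrable_on \<gamma>" if "H holomorphic_on T" for H
    using contour_integrable_holomorphic_simple[OF that open_T \<gamma>] .
  have base: "(\<lambda>\<zeta>. G \<zeta> / R a0 \<zeta>) contour_integrable_on \<gamma>"
    using base_nonzero by (intro integrable holomorphic_intros G holomorphic_base) auto
  have pole: "(\<lambda>\<zeta>. G \<zeta> / ((\<zeta> - c) * R a0 \<zeta>)) contour_integrable_on \<gamma>" if "c \<notin> T" for c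
    using that base_nonzero by (intro integrable holomorphic_intros G holomorphic_base) auto
  have a0: "a0 \<notin> T" using base_ne by blast
  have "contour_integral \<gamma> (\<lambda>\<zeta>. \<zeta> * G \<zeta> / ((\<zeta> - a0) * R a0 \<zeta>))
          = contour_integral \<gamma> (\<lambda>\<zeta>. G \<zeta> / R a0 \<zeta> + a0 * (G \<zeta> / ((\<zeta> - a0) * R a0 \<zeta>)))"
    using \<gamma>(2) base_ne base_nonzero by (intro contour_integral_eq) (auto simp: field_simps)
  also have "\<dots> = contour_integral \<gamma> (\<lambda>\<zeta>. G \<zeta> / R a0 \<zeta>)
                    + a0 * contour_integral \<gamma> (\<lambda>\<zeta>. G \<zeta> / ((\<zeta> - a0) * R a0 \<zeta>))"
    by (simp only: contour_integral_add[OF base contour_integrable_lmul[OF pole[OF a0]]]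
        contour_integral_cmult)
  finally have moment: "\<dots> = contour_integral \<gamma> (\<lambda>\<zeta>. \<zeta> * G \<zeta> / ((\<zeta> - a0) * R a0 \<zeta>))" ..
  have "contour_integral \<gamma> (\<lambda>\<zeta>. G \<zeta> / (\<zeta> - w) / ((\<zeta> - a0) * R a0 \<zeta>))
          = contour_integral \<gamma> (\<lambda>\<zeta>. (G \<zeta> / ((\<zeta> - w) * R a0 \<zeta>) - G \<zeta> / ((\<zeta> - a0) * R a0 \<zeta>)) / (w - a0))"
    using \<gamma>(2) w base_ne base_nonzero
    by (intro contour_integral_eq) (auto simp: divide_simps; simp add: algebra_simps)
  also have "\<dots> = (contour_integral \<gamma> (\<lambda>\<zeta>. G \<zeta> / ((\<zeta> - w) * R a0 \<zeta>))
                    - contour_integral \<gamma> (\<lambda>\<zeta>. G \<zeta> / ((\<zeta> - a0) * R a0 \<zeta>))) / (w - a0)"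
    by (simp only: contour_integral_divide_const contour_integral_diff[OF pole[OF w(1)] pole[OF a0]])
  finally have partial: "\<dots> = contour_integral \<gamma> (\<lambda>\<zeta>. G \<zeta> / (\<zeta> - w) / ((\<zeta> - a0) * R a0 \<zeta>))" ..
  have "(\<lambda>\<zeta>. \<zeta> * G \<zeta>) holomorphic_on T"
    by (intro holomorphic_intros G)
  note moment_derivative = has_field_derivative_contour_integral[OF \<gamma> this, unfolded moment[symmetric]]
  have "(\<lambda>\<zeta>. G \<zeta> / (\<zeta> - w)) holomorphic_on T"
    using w by (intro holomorphic_intros G) auto
  note shift_derivative = has_field_derivative_contour_integral[OF \<gamma> this, unfolded partial[symmetric]]
  show ?thesis
    unfolding has_row_derivatives_def
  proof (intro conjI)
    show "((\<lambda>a. contour_integral \<gamma> (\<lambda>\<zeta>. G \<zeta> / ((\<zeta> - w) * R a \<zeta>))) has_field_derivative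
        (contour_integral \<gamma> (\<lambda>\<zeta>. G \<zeta> / ((\<zeta> - w) * R a0 \<zeta>))
          - contour_integral \<gamma> (\<lambda>\<zeta>. G \<zeta> / ((\<zeta> - a0) * R a0 \<zeta>))) / (2 * (w - a0))) (at a0)"
      using shift_derivative by (simp add: divide_divide_eq_left mult.commute)
  qed (use has_field_derivative_contour_integral[OF \<gamma> G] moment_derivative in auto)
qed

lemma has_row_derivatives_cint2:
  assumes "valid_path p" "path_image p \<subseteq> T" "valid_path q" "path_image q \<subseteq> T"
    and "G holomorphic_on T" "w \<notin> T" "w \<noteq> a0"
  shows "has_row_derivatives (\<lambda>a. cint2 p q (\<lambda>\<zeta>. G \<zeta> / R a \<zeta>))
      (\<lambda>a. cint2 p q (\<lambda>\<zeta>. \<zeta> * G \<zeta> / R a \<zeta>)) (\<lambda>a. cint2 p q (\<lambda>\<zeta>. G \<zeta> / ((\<zeta> - w) * R a \<zeta>)))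
      (cint2 p q (\<lambda>\<zeta>. G \<zeta> / ((\<zeta> - a0) * R a0 \<zeta>))) a0 w"
  unfolding cint2_def using assms
  by (intro has_row_derivatives_add has_row_derivatives_contour_integral)

end

lemma branch_family_Ppoly:
  assumes T: "open T" and j: "j < 6" and r: "0 < r" "ball (al j) r \<inter> T = {}"
    and bp: "\<And>k. k < 6 \<Longrightarrow> al k \<notin> T"
    and sq: "\<And>a \<zeta>. a \<in> ball (al j) r \<Longrightarrow> \<zeta> \<in> T \<Longrightarrow> (R a \<zeta>)\<^sup>2 = Ppoly al j a \<zeta>"
    and cont: "continuous_on (ball (al j) r \<times> T) (\<lambda>(a, \<zeta>). R a \<zeta>)"
  shows "branch_family T R (al j) r"
proof
  have center: "al j \<in> ball (al j) r" using r(1) by simp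
  show "r \<le> norm (\<zeta> - al j)" if "\<zeta> \<in> T" for \<zeta>
    using that r(2) by (force simp: dist_norm norm_minus_commute)
  show nonzero: "R (al j) \<zeta> \<noteq> 0" if "\<zeta> \<in> T" for \<zeta>
    using sq[OF center that] Ppoly_nonzero[of \<zeta> al j] bp that by fastforce
  show "continuous_on (ball (al j) r) (\<lambda>a. R a \<zeta>)" if "\<zeta> \<in> T" for \<zeta>
  proof -
    have "continuous_on (ball (al j) r) ((\<lambda>(a, \<zeta>). R a \<zeta>) \<circ> (\<lambda>a. (a, \<zeta>)))"
      by (rule continuous_on_compose[OF _ continuous_on_subset[OF cont]])
         (auto intro!: continuous_intros simp: that)
    thus ?thesis by (simp add: o_def)
  qed
  have "continuous_on T ((\<lambda>(a, \<zeta>). R a \<zeta>) \<circ> (\<lambda>\<zeta>. (al j, \<zeta>)))"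
    by (rule continuous_on_compose[OF _ continuous_on_subset[OF cont]])
       (auto intro!: continuous_intros simp: center r(1))
  hence "continuous_on T (R (al j))"
    by (simp add: o_def)
  moreover have "Ppoly al j (al j) holomorphic_on T"
    unfolding Ppoly_def[abs_def] by (intro holomorphic_intros)
  ultimately show "R (al j) holomorphic_on T"
    using nonzero sq[OF center] holomorphic_on_continuous_sqrt[OF T] by blast
  show "(R a \<zeta>)\<^sup>2 * (\<zeta> - al j) = (R (al j) \<zeta>)\<^sup>2 * (\<zeta> - a)" if "a \<in> ball (al j) r" "\<zeta> \<in> T" for a \<zeta>
    unfolding sq[OF that] sq[OF center that(2)] by (rule Ppoly_mult_eq[OF j])
qed (use T r in auto)

section \<open>The determinants D and K\<close>

lemma det3_has_field_derivative:
  fixes e11 e12 e13 e21 e22 e23 e31 e32 e33 :: "complex \<Rightarrow> complex"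
  assumes "(e11 has_field_derivative d11) (at x)" "(e12 has_field_derivative d12) (at x)"
    "(e13 has_field_derivative d13) (at x)" "(e21 has_field_derivative d21) (at x)"
    "(e22 has_field_derivative d22) (at x)" "(e23 has_field_derivative d23) (at x)"
    "(e31 has_field_derivative d31) (at x)" "(e32 has_field_derivative d32) (at x)"
    "(e33 has_field_derivative d33) (at x)"
  shows "((\<lambda>a. det3 (e11 a) (e12 a) (e13 a) (e21 a) (e22 a) (e23 a) (e31 a) (e32 a) (e33 a))
     has_field_derivative
       det3 d11 (e12 x) (e13 x) d21 (e22 x) (e23 x) d31 (e32 x) (e33 x)
     + det3 (e11 x) d12 (e13 x) (e21 x) d22 (e23 x) (e31 x) d32 (e33 x)
     + det3 (e11 x) (e12 x) d13 (e21 x) (e22 x) d23 (e31 x) (e32 x) d33) (at x)"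
  unfolding det3_def
  by (rule derivative_eq_intros assms refl)+ (simp add: algebra_simps)

text \<open>Since D \<noteq> 0, the modulation equation makes the column of 1/(\<zeta> - a) a combination
  l col0 + u col1 of the first two columns; then every determinant below is a multiple of
  det (col0, col1, colz), which the equations for W and \<Omega> reduce to D (fz + W mz + \<Omega> cz).\<close>
lemma det3_modulated_identity:
  fixes m0 m1 mz ma c0 c1 cz ca f0 f1 fz fa W \<Omega> a z :: complex
  assumes modulation: "det3 m0 m1 ma c0 c1 ca f0 f1 fa = 0" and D: "m0 * c1 - m1 * c0 \<noteq> 0"
    and W: "f0 + W * m0 + \<Omega> * c0 = 0" "f1 + W * m1 + \<Omega> * c1 = 0" and z: "z \<noteq> a"
  shows "det3 (ma / 2) m1 mz (ca / 2) c1 cz (fa / 2) f1 fz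
       + det3 m0 ((m0 + a * ma) / 2) mz c0 ((c0 + a * ca) / 2) cz f0 ((f0 + a * fa) / 2) fz
       + det3 m0 m1 ((mz - ma) / (2 * (z - a))) c0 c1 ((cz - ca) / (2 * (z - a)))
           f0 f1 ((fz - fa) / (2 * (z - a)))
     = (fz + W * mz + \<Omega> * cz) * ((m0 * c1 - m1 * c0) / (2 * (z - a))
         + (ma / 2 * c1 + m0 * ((c0 + a * ca) / 2) - ((m0 + a * ma) / 2 * c0 + m1 * (ca / 2))))"
proof -
  define D where "D = m0 * c1 - m1 * c0"
  define l where "l = (ma * c1 - m1 * ca) / D"
  define u where "u = (m0 * ca - ma * c0) / D"
  have lD: "l * D = ma * c1 - m1 * ca" and uD: "u * D = m0 * ca - ma * c0"
    using D by (simp_all add: l_def u_def D_def)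
  have "(l * m0 + u * m1) * D = m0 * (l * D) + m1 * (u * D)" by (simp add: algebra_simps)
  also have "\<dots> = ma * D" unfolding lD uD by (simp add: D_def algebra_simps)
  finally have ma: "ma = l * m0 + u * m1" using D by (simp add: D_def)
  have "(l * c0 + u * c1) * D = c0 * (l * D) + c1 * (u * D)" by (simp add: algebra_simps)
  also have "\<dots> = ca * D" unfolding lD uD by (simp add: D_def algebra_simps)
  finally have ca: "ca = l * c0 + u * c1" using D by (simp add: D_def)
  have "D * (fa - l * f0 - u * f1) = det3 m0 m1 ma c0 c1 ca f0 f1 fa"
    unfolding det3_def D_def ma ca by (simp add: algebra_simps)
  hence "fa - l * f0 - u * f1 = 0"
    using modulation D by (simp add: D_def)
  hence fa: "fa = l * f0 + u * f1"
    by (metis diff_diff_eq eq_iff_diff_eq_0)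
  have f0: "f0 = - W * m0 - \<Omega> * c0" and f1: "f1 = - W * m1 - \<Omega> * c1"
    using W by (simp_all add: algebra_simps eq_neg_iff_add_eq_0)
  define E where "E = det3 m0 m1 mz c0 c1 cz f0 f1 fz"
  have E: "E = D * (fz + W * mz + \<Omega> * cz)"
    unfolding E_def D_def f0 f1 det3_def by (simp add: algebra_simps)
  have col0: "det3 (ma / 2) m1 mz (ca / 2) c1 cz (fa / 2) f1 fz = l / 2 * E"
    unfolding E_def ma ca fa det3_def by (simp add: field_simps; simp add: algebra_simps)
  have col1: "det3 m0 ((m0 + a * ma) / 2) mz c0 ((c0 + a * ca) / 2) cz f0 ((f0 + a * fa) / 2) fz
      = a * u / 2 * E"
    unfolding E_def ma ca fa det3_def by (simp add: field_simps; simp add: algebra_simps)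
  have colz: "det3 m0 m1 ((mz - ma) / (2 * (z - a))) c0 c1 ((cz - ca) / (2 * (z - a)))
      f0 f1 ((fz - fa) / (2 * (z - a))) = (E - det3 m0 m1 ma c0 c1 ca f0 f1 fa) / (2 * (z - a))"
    unfolding E_def det3_def using z by (simp add: divide_simps; simp add: algebra_simps)
  have D': "ma / 2 * c1 + m0 * ((c0 + a * ca) / 2) - ((m0 + a * ma) / 2 * c0 + m1 * (ca / 2))
      = (l * D + a * (u * D)) / 2"
    unfolding lD uD by (simp add: field_simps; simp add: algebra_simps)
  have "l / 2 * E + a * u / 2 * E + E / (2 * (z - a))
      = (fz + W * mz + \<Omega> * cz) * (D / (2 * (z - a)) + (l * D + a * (u * D)) / 2)"
    unfolding E using z by (simp add: field_simps; simp add: algebra_simps)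
  thus ?thesis
    unfolding col0 col1 colz modulation D' D_def[symmetric] by simp
qed

lemma deriv_det3_modulated:
  fixes m0 m1 mz c0 c1 cz f0 f1 fz :: "complex \<Rightarrow> complex" and ma ca fa W \<Omega> a z :: complex
  assumes rows: "has_row_derivatives m0 m1 mz ma a z" "has_row_derivatives c0 c1 cz ca a z"
      "has_row_derivatives f0 f1 fz fa a z"
    and modulation: "det3 (m0 a) (m1 a) ma (c0 a) (c1 a) ca (f0 a) (f1 a) fa = 0"
    and D: "m0 a * c1 a - m1 a * c0 a \<noteq> 0"
    and W: "f0 a + W * m0 a + \<Omega> * c0 a = 0" "f1 a + W * m1 a + \<Omega> * c1 a = 0"
    and z: "z \<noteq> a"
  shows "(\<lambda>b. m0 b * c1 b - m1 b * c0 b) field_differentiable at a"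
    and "(\<lambda>b. det3 (m0 b) (m1 b) (mz b) (c0 b) (c1 b) (cz b) (f0 b) (f1 b) (fz b))
           field_differentiable at a"
    and "deriv (\<lambda>b. det3 (m0 b) (m1 b) (mz b) (c0 b) (c1 b) (cz b) (f0 b) (f1 b) (fz b)) a
       = (fz a + W * mz a + \<Omega> * cz a)
         * ((m0 a * c1 a - m1 a * c0 a) / (2 * (z - a)) + deriv (\<lambda>b. m0 b * c1 b - m1 b * c0 b) a)"
proof -
  define D' where
    "D' = ma / 2 * c1 a + m0 a * ((c0 a + a * ca) / 2) - ((m0 a + a * ma) / 2 * c0 a + m1 a * (ca / 2))"
  have deriv_D: "((\<lambda>b. m0 b * c1 b - m1 b * c0 b) has_field_derivative D') (at a)"
    using rows unfolding has_row_derivatives_def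
    by (auto intro!: derivative_eq_intros simp: D'_def algebra_simps)
  have deriv_det: "((\<lambda>b. det3 (m0 b) (m1 b) (mz b) (c0 b) (c1 b) (cz b) (f0 b) (f1 b) (fz b))
      has_field_derivative
        det3 (ma / 2) (m1 a) (mz a) (ca / 2) (c1 a) (cz a) (fa / 2) (f1 a) (fz a)
      + det3 (m0 a) ((m0 a + a * ma) / 2) (mz a) (c0 a) ((c0 a + a * ca) / 2) (cz a)
          (f0 a) ((f0 a + a * fa) / 2) (fz a)
      + det3 (m0 a) (m1 a) ((mz a - ma) / (2 * (z - a))) (c0 a) (c1 a) ((cz a - ca) / (2 * (z - a)))
          (f0 a) (f1 a) ((fz a - fa) / (2 * (z - a)))) (at a)"
    using rows unfolding has_row_derivatives_def by (auto intro!: det3_has_field_derivative)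
  show "(\<lambda>b. m0 b * c1 b - m1 b * c0 b) field_differentiable at a"
    using deriv_D by (auto simp: field_differentiable_def)
  show "(\<lambda>b. det3 (m0 b) (m1 b) (mz b) (c0 b) (c1 b) (cz b) (f0 b) (f1 b) (fz b))
      field_differentiable at a"
    using deriv_det by (auto simp: field_differentiable_def)
  show "deriv (\<lambda>b. det3 (m0 b) (m1 b) (mz b) (c0 b) (c1 b) (cz b) (f0 b) (f1 b) (fz b)) a
       = (fz a + W * mz a + \<Omega> * cz a)
         * ((m0 a * c1 a - m1 a * c0 a) / (2 * (z - a)) + deriv (\<lambda>b. m0 b * c1 b - m1 b * c0 b) a)"
    unfolding DERIV_imp_deriv[OF deriv_det] DERIV_imp_deriv[OF deriv_D] D'_def
    by (rule det3_modulated_identity[OF modulation D W z])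
qed

lemma hfun_eq:
  "hfun R Rc f gh gmp gmm gcp gcm W \<Omega> z = R z / (2 * pi * \<i>) *
     (contour_integral gh (\<lambda>\<zeta>. f \<zeta> / ((\<zeta> - z) * R \<zeta>))
      + W * cint2 gmp gmm (\<lambda>\<zeta>. 1 / ((\<zeta> - z) * R \<zeta>))
      + \<Omega> * cint2 gcp gcm (\<lambda>\<zeta>. 1 / ((\<zeta> - z) * Rc \<zeta>)))"
  using contour_integral_cmult[of _ W "\<lambda>\<zeta>. 1 / ((\<zeta> - z) * R \<zeta>)"]
    contour_integral_cmult[of _ \<Omega> "\<lambda>\<zeta>. 1 / ((\<zeta> - z) * Rc \<zeta>)"]
  by (simp add: hfun_def cint2_def distrib_left)

theorem lemma1:
  fixes al :: "nat \<Rightarrow> complex" and j :: nat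
    and f :: "complex \<Rightarrow> complex" and U :: "complex set"
    and R Rc :: "complex \<Rightarrow> complex \<Rightarrow> complex" and S Sc :: "complex set" and r :: real
    and gm0 gmp_arc gmm_arc gcp_arc gcm_arc :: "real \<Rightarrow> complex"
    and gh gmp gmm gcp gcm :: "real \<Rightarrow> complex"
    and W \<Omega> z :: complex
  assumes
    upper: "Im (al 0) > 0" "Im (al 2) > 0" "Im (al 4) > 0"
    and conj: "al 1 = cnj (al 0)" "al 3 = cnj (al 2)" "al 5 = cnj (al 4)"
    and distinct: "inj_on al {..<6}"
    and j: "j < 6"
    and arc_ends:
      "pathstart gm0 = al 1" "pathfinish gm0 = al 0"
      "pathstart gmp_arc = al 2" "pathfinish gmp_arc = al 4"
      "pathstart gmm_arc = al 5" "pathfinish gmm_arc = al 3"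
      "pathstart gcp_arc = al 0" "pathfinish gcp_arc = al 2"
      "pathstart gcm_arc = al 3" "pathfinish gcm_arc = al 1"
    and gamma_arc: "arc (gmm_arc +++ gcm_arc +++ gm0 +++ gcp_arc +++ gmp_arc)"
    \<comment> \<open>R (at the actual value of alpha_j) is the square root with branchcuts on the main arcs\<close>
    and R_sq: "\<And>\<zeta>. (R (al j) \<zeta>)\<^sup>2 = Ppoly al j (al j) \<zeta>"
    and R_hol: "R (al j) holomorphic_on
                  - (path_image gm0 \<union> path_image gmp_arc \<union> path_image gmm_arc)"
    and f_hol: "open U" "f holomorphic_on U" "path_image gh \<subseteq> U"
    and f_schwarz: "\<And>w. w \<in> U \<Longrightarrow> cnj w \<in> U \<and> f (cnj w) = cnj (f w)"
    and loops: "valid_path gh" "simple_path gh" "pathfinish gh = pathstart gh"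
      "valid_path gmp" "simple_path gmp" "pathfinish gmp = pathstart gmp"
      "valid_path gmm" "simple_path gmm" "pathfinish gmm = pathstart gmm"
      "valid_path gcp" "pathfinish gcp = pathstart gcp"
      "valid_path gcm" "pathfinish gcm = pathstart gcm"
    and gh_around: "path_image (gmm_arc +++ gcm_arc +++ gm0 +++ gcp_arc +++ gmp_arc)
                      \<subseteq> inside (path_image gh)"
      "path_image gmp \<subseteq> inside (path_image gh)" "path_image gmm \<subseteq> inside (path_image gh)"
      "path_image gcp \<subseteq> inside (path_image gh)" "path_image gcm \<subseteq> inside (path_image gh)"
    and gm_around: "path_image gmp_arc \<subseteq> inside (path_image gmp)"
      "path_image gmm_arc \<subseteq> inside (path_image gmm)"
    and gc_around: "path_image gcp_arc \<subseteq> inside (path_image gcp)"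
      "path_image gcm_arc \<subseteq> inside (path_image gcm)"
    and other_bp_outside:
      "\<And>k. k \<in> {0, 1, 3, 5} \<Longrightarrow> al k \<in> outside (path_image gmp)"
      "\<And>k. k \<in> {0, 1, 2, 4} \<Longrightarrow> al k \<in> outside (path_image gmm)"
      "\<And>k. k \<in> {1, 3, 4, 5} \<Longrightarrow> al k \<in> outside (path_image gcp)"
      "\<And>k. k \<in> {0, 2, 4, 5} \<Longrightarrow> al k \<in> outside (path_image gcm)"
    \<comment> \<open>alpha = alpha_j varies in a disc; R a is the continuous (in a) deformation of the branch,
       on an open neighbourhood S of the contours\<close>
    and S: "open S" "path_image gh \<subseteq> S" "path_image gmp \<subseteq> S" "path_image gmm \<subseteq> S"
    and S_cuts: "S \<inter> (path_image gm0 \<union> path_image gmp_arc \<union> path_image gmm_arc) = {}"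
    and S_bp: "\<And>k. k < 6 \<Longrightarrow> al k \<notin> S"
    and r: "r > 0" "ball (al j) r \<inter> S = {}"
    and R_fam_sq: "\<And>a \<zeta>. a \<in> ball (al j) r \<Longrightarrow> \<zeta> \<in> S \<Longrightarrow> (R a \<zeta>)\<^sup>2 = Ppoly al j a \<zeta>"
    and R_fam_cont: "continuous_on (ball (al j) r \<times> S) (\<lambda>(a, \<zeta>). R a \<zeta>)"
    and R_fam_hol: "\<And>\<zeta>. \<zeta> \<in> S \<Longrightarrow> (\<lambda>a. R a \<zeta>) holomorphic_on ball (al j) r"
    \<comment> \<open>Rc a: the branch of the square root continued along the contours of hat-gamma_c
       (these cross the main-arc cuts), depending continuously on a\<close>
    and Sc: "open Sc" "path_image gcp \<subseteq> Sc" "path_image gcm \<subseteq> Sc"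
    and Sc_bp: "\<And>k. k < 6 \<Longrightarrow> al k \<notin> Sc"
    and r_c: "ball (al j) r \<inter> Sc = {}"
    and Rc_fam_sq: "\<And>a \<zeta>. a \<in> ball (al j) r \<Longrightarrow> \<zeta> \<in> Sc \<Longrightarrow> (Rc a \<zeta>)\<^sup>2 = Ppoly al j a \<zeta>"
    and Rc_fam_cont: "continuous_on (ball (al j) r \<times> Sc) (\<lambda>(a, \<zeta>). Rc a \<zeta>)"
    and Rc_fam_hol: "\<And>\<zeta>. \<zeta> \<in> Sc \<Longrightarrow> (\<lambda>a. Rc a \<zeta>) holomorphic_on ball (al j) r"
    and D_nz: "Dfun (R (al j)) (Rc (al j)) gmp gmm gcp gcm \<noteq> 0"
    and W\<Omega>: "\<And>k::nat. k \<in> {0, 1} \<Longrightarrow>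
        contour_integral gh (\<lambda>\<zeta>. \<zeta> ^ k * f \<zeta> / R (al j) \<zeta>)
        + W * cint2 gmp gmm (\<lambda>\<zeta>. \<zeta> ^ k / R (al j) \<zeta>)
        + \<Omega> * cint2 gcp gcm (\<lambda>\<zeta>. \<zeta> ^ k / Rc (al j) \<zeta>) = 0"
    and modulation: "Kfun (R (al j)) (Rc (al j)) f gh gmp gmm gcp gcm (al j) = 0"
    and z: "z \<in> inside (path_image gh)"
      "z \<in> outside (path_image gmp)" "z \<in> outside (path_image gmm)"
      "z \<in> outside (path_image gcp)" "z \<in> outside (path_image gcm)"
  shows "(\<lambda>a. Kfun (R a) (Rc a) f gh gmp gmm gcp gcm z) field_differentiable (at (al j))
    \<and> (\<lambda>a. Dfun (R a) (Rc a) gmp gmm gcp gcm) field_differentiable (at (al j))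
    \<and> deriv (\<lambda>a. Kfun (R a) (Rc a) f gh gmp gmm gcp gcm z) (al j)
       = hfun (R (al j)) (Rc (al j)) f gh gmp gmm gcp gcm W \<Omega> z / R (al j) z
         * (Dfun (R (al j)) (Rc (al j)) gmp gmm gcp gcm / (2 * (z - al j))
            + deriv (\<lambda>a. Dfun (R a) (Rc a) gmp gmm gcp gcm) (al j))"
proof -
  have "al 0 \<in> path_image gcp_arc" "al 1 \<in> path_image gcm_arc" "al 2 \<in> path_image gmp_arc"
    "al 3 \<in> path_image gmm_arc" "al 4 \<in> path_image gmp_arc" "al 5 \<in> path_image gmm_arc"
    using arc_ends pathstart_in_path_image pathfinish_in_path_image by metis+
  hence "al k \<in> inside (path_image gmp) \<union> inside (path_image gmm)
           \<union> inside (path_image gcp) \<union> inside (path_image gcm)" if "k < 6" for k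
    using that gm_around gc_around less_Suc_eq numeral_eq_Suc by (auto 0 3)
  hence z_not_bp: "z \<noteq> al k" if "k < 6" for k
    using that z inside_Int_outside by blast
  have paths: "path_image gmp \<subseteq> S - {z}" "path_image gmm \<subseteq> S - {z}" "path_image gcp \<subseteq> Sc - {z}"
      "path_image gcm \<subseteq> Sc - {z}" "path_image gh \<subseteq> S \<inter> U - {z}"
    using S Sc f_hol(3) z inside_no_overlap outside_no_overlap by blast+
  have z_out: "z \<notin> S - {z}" "z \<notin> Sc - {z}" "z \<notin> S \<inter> U - {z}" and z_ne: "z \<noteq> al j"
    using z_not_bp[OF j] by auto
  interpret m: branch_family "S - {z}" R "al j" r
    using branch_family_Ppoly[OF S(1) j r S_bp R_fam_sq R_fam_cont]
    by (rule branch_family.subset) (auto simp: open_delete S(1))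
  interpret c: branch_family "Sc - {z}" Rc "al j" r
    using branch_family_Ppoly[OF Sc(1) j r(1) r_c Sc_bp Rc_fam_sq Rc_fam_cont]
    by (rule branch_family.subset) (auto simp: open_delete Sc(1))
  interpret h: branch_family "S \<inter> U - {z}" R "al j" r
    by (rule m.subset) (auto intro!: open_delete open_Int S(1) f_hol(1))
  have "f holomorphic_on S \<inter> U - {z}"
    using f_hol(2) by (rule holomorphic_on_subset) auto
  note K = deriv_det3_modulated[OF
      m.has_row_derivatives_cint2[OF loops(4) paths(1) loops(7) paths(2) holomorphic_on_const z_out(1) z_ne,
        of 1, unfolded mult_1_right]
      c.has_row_derivatives_cint2[OF loops(10) paths(3) loops(12) paths(4) holomorphic_on_const z_out(2) z_ne,
        of 1, unfolded mult_1_right]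
      h.has_row_derivatives_contour_integral[OF loops(1) paths(5) this z_out(3) z_ne]
      modulation[unfolded Kfun_def, simplified] D_nz[unfolded Dfun_def]
      W\<Omega>[of 0, simplified] W\<Omega>[of 1, simplified] z_ne]
  have Rz: "R (al j) z \<noteq> 0"
    using R_sq[of z] Ppoly_nonzero[of z al j] z_not_bp by auto
  show ?thesis
  proof (intro conjI)
    show "(\<lambda>a. Kfun (R a) (Rc a) f gh gmp gmm gcp gcm z) field_differentiable at (al j)"
      unfolding Kfun_def by (intro field_differentiable_mult field_differentiable_const K(2))
    show "(\<lambda>a. Dfun (R a) (Rc a) gmp gmm gcp gcm) field_differentiable at (al j)"
      unfolding Dfun_def by (rule K(1))
    show "deriv (\<lambda>a. Kfun (R a) (Rc a) f gh gmp gmm gcp gcm z) (al j)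
       = hfun (R (al j)) (Rc (al j)) f gh gmp gmm gcp gcm W \<Omega> z / R (al j) z
         * (Dfun (R (al j)) (Rc (al j)) gmp gmm gcp gcm / (2 * (z - al j))
            + deriv (\<lambda>a. Dfun (R a) (Rc a) gmp gmm gcp gcm) (al j))"
      unfolding Kfun_def Dfun_def hfun_eq deriv_cmult[OF K(2)] K(3) using Rz by simp
  qed
qed

end
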